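(* Let $\mathbb{F}$ be a field with $\operatorname{char}\mathbb{F}\ne 2,3$, let $2\le m,n<\infty$, and let $P$ be an $n\times m$ matrix over $\mathbb{F}$ with $\operatorname{rank}P=r\ge 2$. Then the Munn algebra $\mathcal{A}=\mathfrak{M}(\mathbb{F}, m, n, P)$ is zero Jordan product determined.
   Context: $\mathfrak{M}(\mathbb{F}, m, n, P)$ is the $\mathbb{F}$-algebra of all $m\times n$ matrices over $\mathbb{F}$ with entrywise addition and scalar multiplication and product $A\bullet B=APB$. The Jordan product is $x\circ y = x\bullet y + y\bullet x$. An associative $\mathbb{F}$-algebra $\mathcal{A}$ is zero Jordan product determined if for every bilinear functional $\phi:\mathcal{A}\times\mathcal{A}\to\mathbb{F}$ such that $x\circ y=0$ implies $\phi(x,y)=0$ for all $x,y\in\mathcal{A}$, there exists a linear functional $\tau$ on $\mathcal{A}$ with $\phi(x,y)=\tau(x\circ y)$ for all $x,y\in\mathcal{A}$. *)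

theory Defs
  imports "HOL-Analysis.Analysis"
begin

text \<open>Matrices over a field 'a with m = CARD('m) rows and n = CARD('n) columns are
  elements of type 'a^'n^'m.  Entrywise scalar multiplication:\<close>

definition mscale :: "'a::field \<Rightarrow> 'a^'n^'m \<Rightarrow> 'a^'n^'m" where
  "mscale c A = (\<chi> i j. c * A $ i $ j)"

definition munn_mult :: "'a::field^'m^'n \<Rightarrow> 'a^'n^'m \<Rightarrow> 'a^'n^'m \<Rightarrow> 'a^'n^'m" where
  "munn_mult P A B = A ** P ** B"

definition munn_jordan :: "'a::field^'m^'n \<Rightarrow> 'a^'n^'m \<Rightarrow> 'a^'n^'m \<Rightarrow> 'a^'n^'m" where
  "munn_jordan P x y = munn_mult P x y + munn_mult P y x"

definition linear_functional :: "('a::field^'n^'m \<Rightarrow> 'a) \<Rightarrow> bool" where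
  "linear_functional \<tau> \<longleftrightarrow>
     (\<forall>x y. \<tau> (x + y) = \<tau> x + \<tau> y) \<and> (\<forall>c x. \<tau> (mscale c x) = c * \<tau> x)"

definition bilinear_functional :: "('a::field^'n^'m \<Rightarrow> 'a^'n^'m \<Rightarrow> 'a) \<Rightarrow> bool" where
  "bilinear_functional \<phi> \<longleftrightarrow> (\<forall>x. linear_functional (\<lambda>y. \<phi> x y)) \<and> (\<forall>y. linear_functional (\<lambda>x. \<phi> x y))"

definition munn_zero_jordan_product_determined :: "'a::field^'m^'n \<Rightarrow> ('n \<times> 'm) itself \<Rightarrow> bool" where
  "munn_zero_jordan_product_determined P _ \<longleftrightarrow>
     (\<forall>\<phi> :: 'a^'n^'m \<Rightarrow> 'a^'n^'m \<Rightarrow> 'a. bilinear_functional \<phi> \<longrightarrow>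
        (\<forall>x y. munn_jordan P x y = 0 \<longrightarrow> \<phi> x y = 0) \<longrightarrow>
        (\<exists>\<tau>. linear_functional \<tau> \<and> (\<forall>x y. \<phi> x y = \<tau> (munn_jordan P x y))))"

end

theory Submission
  imports Defs
begin

text \<open>
  Write \<open>\<langle>v, s\<rangle> = v\<^sup>T P s\<close>.  Rank-one matrices multiply by
  \<open>(u v\<^sup>T) \<bullet> (s t\<^sup>T) = \<langle>v, s\<rangle> u t\<^sup>T\<close>, so \<open>u v\<^sup>T \<circ> s t\<^sup>T = 0\<close> as soon as
  \<open>\<langle>v, s\<rangle> = \<langle>t, u\<rangle> = 0\<close>.  A bilinear form vanishing wherever \<open>\<langle>_, _\<rangle>\<close> vanishes
  is a multiple of \<open>\<langle>_, _\<rangle>\<close>; applied to \<open>\<phi>\<close> on rank-one arguments, with two of the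
  four vectors fixed at a time, this reduces \<open>\<phi>\<close> to the values \<open>\<phi>(u v\<^sub>1\<^sup>T, s\<^sub>1 t\<^sup>T)\<close>
  for a pair with \<open>\<langle>v\<^sub>1, s\<^sub>1\<rangle> = 1\<close>.  Since the rank is at least 2 there is a second
  such pair orthogonal to the first, and the zero Jordan products it produces force the
  symmetry needed to write \<open>\<phi>(u v\<^sup>T, s t\<^sup>T) = \<langle>v, s\<rangle> \<tau>(u, t) + \<langle>t, u\<rangle> \<tau>(s, v)\<close> for a
  bilinear \<open>\<tau>\<close>.  The right-hand side is the linear extension of \<open>\<tau>\<close> applied to
  \<open>u v\<^sup>T \<circ> s t\<^sup>T\<close>, and both sides are bilinear, so the identity extends from rank-one
  matrices to all matrices.
\<close>

definition outer :: "'a::field^'m \<Rightarrow> 'a^'n \<Rightarrow> 'a^'n^'m" where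
  "outer u v = (\<chi> i j. u$i * v$j)"

definition pairing :: "'a::field^'m^'n \<Rightarrow> 'a^'n \<Rightarrow> 'a^'m \<Rightarrow> 'a" where
  "pairing P v s = (\<Sum>j\<in>UNIV. \<Sum>k\<in>UNIV. v$j * P$j$k * s$k)"

lemma outer_mult_outer:
  "outer u v ** P ** outer s t = mscale (pairing P v s) (outer u t)"
  unfolding vec_eq_iff
  apply (simp add: outer_def mscale_def matrix_matrix_mult_def pairing_def
      sum_distrib_left sum_distrib_right)
  apply (subst sum.swap)
  apply (simp add: mult_ac)
  done

lemma munn_jordan_outer:
  "munn_jordan P (outer u v) (outer s t) =
     mscale (pairing P v s) (outer u t) + mscale (pairing P t u) (outer s v)"
  by (simp add: munn_jordan_def munn_mult_def outer_mult_outer)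

lemma outer_add_left: "outer (u + u') v = outer u v + outer u' v"
  by (simp add: outer_def vec_eq_iff algebra_simps)

lemma outer_add_right: "outer u (v + v') = outer u v + outer u v'"
  by (simp add: outer_def vec_eq_iff algebra_simps)

lemma outer_scale_left: "outer (c *s u) v = mscale c (outer u v)"
  by (simp add: outer_def mscale_def vec_eq_iff algebra_simps)

lemma outer_scale_right: "outer u (c *s v) = mscale c (outer u v)"
  by (simp add: outer_def mscale_def vec_eq_iff algebra_simps)

lemma matrix_expansion:
  "(x::'a::field^'n^'m) = (\<Sum>i\<in>UNIV. \<Sum>j\<in>UNIV. mscale (x$i$j) (outer (axis i 1) (axis j 1)))"
  by (simp add: vec_eq_iff mscale_def outer_def axis_def if_distrib[of "\<lambda>z. _ * z"]
      if_distrib[of "\<lambda>z. z * _"] cong: if_cong)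

lemma matrix_add_rdistrib: "(B + C) ** A = B ** A + C ** A"
  by (simp add: matrix_matrix_mult_def vec_eq_iff sum.distrib algebra_simps)

lemma mscale_zero [simp]: "mscale 0 x = 0"
  by (simp add: mscale_def vec_eq_iff)

lemma mscale_one [simp]: "mscale 1 x = x"
  by (simp add: mscale_def vec_eq_iff)

lemma mscale_add: "mscale c (x + y) = mscale c x + mscale c y"
  by (simp add: mscale_def vec_eq_iff algebra_simps)

lemma mscale_matrix_mult_left: "mscale c x ** P ** y = mscale c (x ** P ** y)"
  by (simp add: mscale_def vec_eq_iff matrix_matrix_mult_def sum_distrib_left
      sum_distrib_right mult_ac)

lemma mscale_matrix_mult_right: "x ** P ** mscale c y = mscale c (x ** P ** y)"
  by (simp add: mscale_def vec_eq_iff matrix_matrix_mult_def sum_distrib_left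
      sum_distrib_right mult_ac)

lemma munn_jordan_commute: "munn_jordan P x y = munn_jordan P y x"
  by (simp add: munn_jordan_def add.commute)

lemma munn_jordan_add_left:
  "munn_jordan P (x + y) z = munn_jordan P x z + munn_jordan P y z"
  by (simp add: munn_jordan_def munn_mult_def matrix_add_ldistrib matrix_add_rdistrib
      algebra_simps)

lemma munn_jordan_add_right:
  "munn_jordan P z (x + y) = munn_jordan P z x + munn_jordan P z y"
  by (metis munn_jordan_commute munn_jordan_add_left)

lemma munn_jordan_scale_left: "munn_jordan P (mscale c x) z = mscale c (munn_jordan P x z)"
  by (simp add: munn_jordan_def munn_mult_def mscale_matrix_mult_left
      mscale_matrix_mult_right mscale_add)

lemma munn_jordan_scale_right: "munn_jordan P z (mscale c x) = mscale c (munn_jordan P z x)"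
  by (metis munn_jordan_commute munn_jordan_scale_left)

lemma munn_jordan_diff_left:
  "munn_jordan P (x - y) z = munn_jordan P x z - munn_jordan P y z"
  by (metis munn_jordan_add_left diff_add_cancel add_diff_cancel_right')

lemma munn_jordan_diff_right:
  "munn_jordan P z (x - y) = munn_jordan P z x - munn_jordan P z y"
  by (metis munn_jordan_commute munn_jordan_diff_left)

lemma linear_functional_add: "linear_functional f \<Longrightarrow> f (x + y) = f x + f y"
  by (simp add: linear_functional_def)

lemma linear_functional_scale: "linear_functional f \<Longrightarrow> f (mscale c x) = c * f x"
  by (simp add: linear_functional_def)

lemma linear_functional_zero: "linear_functional f \<Longrightarrow> f 0 = 0"
  using linear_functional_scale[of f 0 0] by simp

lemma linear_functional_diff: "linear_functional f \<Longrightarrow> f (x - y) = f x - f y"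
  by (metis linear_functional_add diff_add_cancel add_diff_cancel_right')

lemma linear_functional_sum:
  "linear_functional f \<Longrightarrow> f (\<Sum>i\<in>S. g i) = (\<Sum>i\<in>S. f (g i))"
  by (induction S rule: infinite_finite_induct)
    (auto simp: linear_functional_zero linear_functional_add)

lemma linear_functional_eqI:
  assumes f: "linear_functional f" and g: "linear_functional g"
    and outer: "\<And>u v. f (outer u v) = g (outer u v)"
  shows "f = g"
proof
  fix x
  show "f x = g x"
    by (subst (1 2) matrix_expansion)
      (simp add: linear_functional_sum[OF f] linear_functional_sum[OF g]
        linear_functional_scale[OF f] linear_functional_scale[OF g] outer)
qed

lemma bilinear_functional_eqI:
  assumes f: "bilinear_functional f" and g: "bilinear_functional g"
    and outer: "\<And>u v s t. f (outer u v) (outer s t) = g (outer u v) (outer s t)"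
  shows "f = g"
proof (intro ext)
  fix x y
  have "f (outer u v) = g (outer u v)" for u v
    using f g outer by (intro linear_functional_eqI) (auto simp: bilinear_functional_def)
  then have "(\<lambda>x. f x y) = (\<lambda>x. g x y)"
    using f g by (intro linear_functional_eqI) (auto simp: bilinear_functional_def)
  then show "f x y = g x y"
    by meson
qed

lemma bilinear_functional_munn_jordan:
  assumes "linear_functional \<tau>"
  shows "bilinear_functional (\<lambda>x y. \<tau> (munn_jordan P x y))"
  using assms
  by (simp add: bilinear_functional_def linear_functional_def munn_jordan_add_left
      munn_jordan_add_right munn_jordan_scale_left munn_jordan_scale_right)

definition tensor_lift :: "('a::field^'n \<Rightarrow> 'a^'m \<Rightarrow> 'a) \<Rightarrow> 'a^'m^'n \<Rightarrow> 'a" where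
  "tensor_lift G z = (\<Sum>i\<in>UNIV. \<Sum>k\<in>UNIV. z$i$k * G (axis i 1) (axis k 1))"

locale vec_bilinear =
  fixes G :: "'a::field^'n \<Rightarrow> 'a^'m \<Rightarrow> 'a"
  assumes add_left: "G (v + v') s = G v s + G v' s"
    and scale_left: "G (c *s v) s = c * G v s"
    and add_right: "G v (s + s') = G v s + G v s'"
    and scale_right: "G v (c *s s) = c * G v s"
begin

lemma diff_left: "G (v - v') s = G v s - G v' s"
  by (metis add_left diff_add_cancel add_diff_cancel_right')

lemma diff_right: "G v (s - s') = G v s - G v s'"
  by (metis add_right diff_add_cancel add_diff_cancel_right')

lemma zero_left: "G 0 s = 0"
  using scale_left[of 0 0 s] by simp

lemma zero_right: "G v 0 = 0"
  using scale_right[of v 0 0] by simp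

lemma sum_left: "G (\<Sum>i\<in>S. f i) s = (\<Sum>i\<in>S. G (f i) s)"
  by (induction S rule: infinite_finite_induct) (simp_all add: zero_left add_left)

lemma sum_right: "G v (\<Sum>i\<in>S. f i) = (\<Sum>i\<in>S. G v (f i))"
  by (induction S rule: infinite_finite_induct) (simp_all add: zero_right add_right)

lemma axis_expansion: "G v s = (\<Sum>i\<in>UNIV. \<Sum>k\<in>UNIV. v$i * s$k * G (axis i 1) (axis k 1))"
proof -
  have "G v s = (\<Sum>k\<in>UNIV. \<Sum>i\<in>UNIV. v$i * s$k * G (axis i 1) (axis k 1))"
    by (subst (1 2) basis_expansion[symmetric])
      (simp add: sum_left sum_right scale_left scale_right sum_distrib_left mult_ac)
  then show ?thesis
    by (subst sum.swap)
qed

lemma linear_functional_tensor_lift: "linear_functional (tensor_lift G)"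
  by (simp add: linear_functional_def tensor_lift_def mscale_def algebra_simps sum.distrib
      sum_distrib_left)

lemma tensor_lift_outer: "tensor_lift G (outer v s) = G v s"
  by (subst axis_expansion) (simp add: tensor_lift_def outer_def)

lemma split_along:
  "G v s = a * b * G x y + a * G x (s - b *s y) + b * G (v - a *s x) y
     + G (v - a *s x) (s - b *s y)"
proof -
  have "G (a *s x + (v - a *s x)) (b *s y + (s - b *s y)) = a * b * G x y
      + a * G x (s - b *s y) + b * G (v - a *s x) y + G (v - a *s x) (s - b *s y)"
    by (simp only: add_left add_right scale_left scale_right) (simp add: algebra_simps)
  then show ?thesis
    by simp
qed

lemma eq_mult_on_complements:
  assumes B: "vec_bilinear B" and one: "B v\<^sub>1 s\<^sub>1 = 1"
    and vanish: "\<And>v s. B v s = 0 \<Longrightarrow> G v s = 0"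
    and x: "B x s\<^sub>1 = 0" and y: "B v\<^sub>1 y = 0"
  shows "G x y = B x y * G v\<^sub>1 s\<^sub>1"
proof (cases "B x y = 0")
  case True
  then show ?thesis
    using vanish by simp
next
  case False
  interpret B: vec_bilinear B by (fact B)
  define d where "d = B x y"
  \<comment> \<open>\<open>v\<^sub>1 + x\<close> and \<open>s\<^sub>1 - y / d\<close> are \<open>B\<close>-orthogonal, so \<open>G\<close> vanishes on them.\<close>
  have "B (1 *s v\<^sub>1 + x) ((- 1 / d) *s y + s\<^sub>1) = 0"
    using one x y False
    by (simp add: B.add_left B.add_right B.diff_left B.diff_right B.scale_left B.scale_right
        d_def)
  then have "G (1 *s v\<^sub>1 + x) ((- 1 / d) *s y + s\<^sub>1) = 0"
    by (rule vanish)
  then have "G v\<^sub>1 s\<^sub>1 - (1 / d) * G x y = 0"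
    using vanish[OF y] vanish[OF x]
    by (simp add: add_left add_right diff_left diff_right scale_left scale_right algebra_simps)
  then show ?thesis
    using False by (simp add: d_def field_simps)
qed

lemma eq_mult_if_vanishes_with:
  assumes B: "vec_bilinear B" and one: "B v\<^sub>1 s\<^sub>1 = 1"
    and vanish: "\<And>v s. B v s = 0 \<Longrightarrow> G v s = 0"
  shows "G v s = B v s * G v\<^sub>1 s\<^sub>1"
proof -
  interpret B: vec_bilinear B by (fact B)
  define a where "a = B v s\<^sub>1"
  define b where "b = B v\<^sub>1 s"
  have x: "B (v - a *s v\<^sub>1) s\<^sub>1 = 0"
    using one by (simp add: B.diff_left B.scale_left a_def)
  have y: "B v\<^sub>1 (s - b *s s\<^sub>1) = 0"
    using one by (simp add: B.diff_right B.scale_right b_def)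
  have xy: "B (v - a *s v\<^sub>1) (s - b *s s\<^sub>1) = B v s - a * b"
    using one
    by (simp add: B.diff_left B.diff_right B.scale_left B.scale_right a_def b_def algebra_simps)
  have "G v s = a * b * G v\<^sub>1 s\<^sub>1 + a * G v\<^sub>1 (s - b *s s\<^sub>1) + b * G (v - a *s v\<^sub>1) s\<^sub>1
      + G (v - a *s v\<^sub>1) (s - b *s s\<^sub>1)"
    by (rule split_along)
  also have "\<dots> = a * b * G v\<^sub>1 s\<^sub>1 + (B v s - a * b) * G v\<^sub>1 s\<^sub>1"
    using vanish[OF x] vanish[OF y] eq_mult_on_complements[OF B one vanish x y] xy by simp
  finally show ?thesis
    by (simp add: algebra_simps)
qed

end

interpretation pairing: vec_bilinear "pairing P" for P
  by unfold_locales (simp_all add: pairing_def algebra_simps sum.distrib sum_distrib_left)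

lemma pairing_axis: "pairing P (axis j 1) (axis k 1) = P$j$k"
  by (simp add: pairing_def axis_def if_distrib[of "\<lambda>z. _ * z"]
      if_distrib[of "\<lambda>z. z * _"] cong: if_cong)

lemma rank_ge_2_noncollinear_rows:
  fixes P :: "'a::field^'m^'n"
  assumes "rank P \<ge> 2"
  obtains j\<^sub>1 j\<^sub>2 where "P$j\<^sub>1 \<noteq> 0" and "\<And>c. P$j\<^sub>2 \<noteq> c *s P$j\<^sub>1"
proof -
  have rows: "rows P = range (\<lambda>j. P$j)"
    by (auto simp: rows_def row_def vec_lambda_eta)
  have "rows P \<subseteq> vec.span {P$j\<^sub>0}" if "\<And>j. \<exists>c. P$j = c *s P$j\<^sub>0" for j\<^sub>0
    using that by (auto simp: rows) (metis vec.span_base vec.span_scale singletonI)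
  then have "rank P \<le> 1" if "\<And>j. \<exists>c. P$j = c *s P$j\<^sub>0" for j\<^sub>0
    using that vec.dim_le_card[of "rows P" "{P$j\<^sub>0}"] by (simp add: row_rank_def_gen)
  with assms have "\<exists>j\<^sub>2. \<forall>c. P$j\<^sub>2 \<noteq> c *s P$j\<^sub>1" for j\<^sub>1
    by fastforce
  moreover have "rank P = 0" if "\<And>j. P$j = 0"
    using that vec.dim_le_card[of "rows P" "{}"] by (simp add: row_rank_def_gen rows)
  with assms have "\<exists>j\<^sub>1. P$j\<^sub>1 \<noteq> 0"
    by fastforce
  ultimately show ?thesis
    using that by blast
qed

lemma biorthogonal_pairs_exist:
  fixes P :: "'a::field^'m^'n"
  assumes "rank P \<ge> 2"
  shows "\<exists>v\<^sub>1 v\<^sub>2 s\<^sub>1 s\<^sub>2. pairing P v\<^sub>1 s\<^sub>1 = 1 \<and> pairing P v\<^sub>2 s\<^sub>2 = 1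
    \<and> pairing P v\<^sub>1 s\<^sub>2 = 0 \<and> pairing P v\<^sub>2 s\<^sub>1 = 0"
proof -
  obtain j\<^sub>1 j\<^sub>2 where row1: "P$j\<^sub>1 \<noteq> 0" and row2: "\<And>c. P$j\<^sub>2 \<noteq> c *s P$j\<^sub>1"
    using rank_ge_2_noncollinear_rows[OF assms] by blast
  obtain k where k: "P$j\<^sub>1$k \<noteq> 0"
    using row1 by (auto simp: vec_eq_iff)
  define l where "l = P$j\<^sub>2$k / P$j\<^sub>1$k"
  obtain k' where k': "P$j\<^sub>2$k' - l * P$j\<^sub>1$k' \<noteq> 0"
    using row2[of l] by (auto simp: vec_eq_iff)
  define v where "v = (axis j\<^sub>1 1 :: 'a^'n)"
  define w where "w = axis j\<^sub>2 1 - l *s (axis j\<^sub>1 1 :: 'a^'n)"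
  define s\<^sub>1 where "s\<^sub>1 = (1 / P$j\<^sub>1$k) *s (axis k 1 :: 'a^'m)"
  define s\<^sub>2 where "s\<^sub>2 = (1 / (P$j\<^sub>2$k' - l * P$j\<^sub>1$k')) *s (axis k' 1 :: 'a^'m)"
  have "pairing P v s\<^sub>1 = 1" "pairing P w s\<^sub>1 = 0" "pairing P w s\<^sub>2 = 1"
    using k k' by (simp_all add: v_def w_def s\<^sub>1_def s\<^sub>2_def pairing.scale_left
        pairing.scale_right pairing.diff_left pairing_axis l_def field_simps)
  then have "pairing P (v - pairing P v s\<^sub>2 *s w) s\<^sub>1 = 1" "pairing P w s\<^sub>2 = 1"
    "pairing P (v - pairing P v s\<^sub>2 *s w) s\<^sub>2 = 0" "pairing P w s\<^sub>1 = 0"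
    by (simp_all add: pairing.diff_left pairing.scale_left)
  then show ?thesis
    by blast
qed

lemma two_neq_zero_if_CHAR_neq_2: "CHAR('a::field) \<noteq> 2 \<Longrightarrow> (2::'a) \<noteq> 0"
  by (metis of_nat_numeral of_nat_eq_0_iff_char_dvd CHAR_not_1 One_nat_def prime_nat_iff
      two_is_prime_nat)

locale zero_jordan_functional =
  fixes P :: "'a::field^'m^'n" and \<phi> :: "'a^'n^'m \<Rightarrow> 'a^'n^'m \<Rightarrow> 'a"
  assumes bilinear: "bilinear_functional \<phi>"
    and vanish: "\<And>x y. munn_jordan P x y = 0 \<Longrightarrow> \<phi> x y = 0"
begin

lemma linear_left: "linear_functional (\<lambda>x. \<phi> x y)"
  using bilinear by (simp add: bilinear_functional_def)

lemma linear_right: "linear_functional (\<phi> x)"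
  using bilinear by (simp add: bilinear_functional_def)

lemmas add_left = linear_functional_add[OF linear_left]
  and add_right = linear_functional_add[OF linear_right]
  and scale_left = linear_functional_scale[OF linear_left]
  and scale_right = linear_functional_scale[OF linear_right]
  and diff_left = linear_functional_diff[OF linear_left]
  and diff_right = linear_functional_diff[OF linear_right]

lemma commute_if_squares_zero:
  assumes "munn_jordan P x x = 0" "munn_jordan P y y = 0"
  shows "\<phi> x y = \<phi> y x"
proof -
  have "munn_jordan P (x + y) (x - y) = 0"
    using assms
    by (simp add: munn_jordan_add_left munn_jordan_diff_right munn_jordan_commute[of P y x])
  then have "\<phi> (x + y) (x - y) = 0"
    by (rule vanish)
  moreover have "\<phi> x x = 0" "\<phi> y y = 0"
    using assms vanish by auto
  ultimately show ?thesis
    by (simp add: add_left diff_right)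
qed

lemma commute_if_absorbed:
  assumes ef: "munn_jordan P e f = 0" and yy: "munn_jordan P y y = 0"
    and ey: "munn_jordan P e y = y" and fy: "munn_jordan P f y = y"
  shows "\<phi> e y = \<phi> y e"
proof -
  have "munn_jordan P y (e - f) = 0"
    using ey fy by (simp add: munn_jordan_diff_right munn_jordan_commute[of P y])
  then have "\<phi> y (e - f) = 0"
    by (rule vanish)
  moreover have "munn_jordan P (e + y) (f - y) = 0"
    using ef yy ey fy
    by (simp add: munn_jordan_add_left munn_jordan_diff_right munn_jordan_commute[of P y f])
  then have "\<phi> (e + y) (f - y) = 0"
    by (rule vanish)
  moreover have "\<phi> e f = 0" "\<phi> y y = 0"
    using ef yy vanish by auto
  ultimately show ?thesis
    by (simp add: add_left diff_left diff_right)
qed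

lemma vec_bilinear_inner_factors: "vec_bilinear (\<lambda>v s. \<phi> (outer u v) (outer s t))"
  by unfold_locales (simp_all add: outer_add_left outer_add_right outer_scale_left
      outer_scale_right add_left add_right scale_left scale_right)

lemma outer_factor:
  assumes one: "pairing P v\<^sub>1 s\<^sub>1 = 1" and "pairing P t u = 0"
  shows "\<phi> (outer u v) (outer s t) = pairing P v s * \<phi> (outer u v\<^sub>1) (outer s\<^sub>1 t)"
proof -
  interpret vec_bilinear "\<lambda>v s. \<phi> (outer u v) (outer s t)"
    by (rule vec_bilinear_inner_factors)
  show ?thesis
    using assms
    by (intro eq_mult_if_vanishes_with[OF pairing.vec_bilinear_axioms one] vanish)
      (simp add: munn_jordan_outer)
qed

end

locale zero_jordan_functional_biorthogonal =
  zero_jordan_functional P \<phi> for P :: "'a::field^'m^'n" and \<phi> +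
  fixes v\<^sub>1 v\<^sub>2 s\<^sub>1 s\<^sub>2
  assumes one_11: "pairing P v\<^sub>1 s\<^sub>1 = 1" and one_22: "pairing P v\<^sub>2 s\<^sub>2 = 1"
    and zero_12: "pairing P v\<^sub>1 s\<^sub>2 = 0" and zero_21: "pairing P v\<^sub>2 s\<^sub>1 = 0"
    and two_neq_zero: "(2::'a) \<noteq> 0"
begin

lemma commute_anchor_left:
  assumes "pairing P v\<^sub>1 s = 0"
  shows "\<phi> (outer s\<^sub>1 v\<^sub>1) (outer s v\<^sub>1) = \<phi> (outer s v\<^sub>1) (outer s\<^sub>1 v\<^sub>1)"
proof -
  have commute: "\<phi> (outer s\<^sub>1 v\<^sub>1) (outer \<sigma> v\<^sub>1) = \<phi> (outer \<sigma> v\<^sub>1) (outer s\<^sub>1 v\<^sub>1)"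
    if "pairing P v\<^sub>1 \<sigma> = 0" "pairing P v\<^sub>2 \<sigma> = 1" for \<sigma>
    by (rule commute_if_absorbed[where f = "outer \<sigma> v\<^sub>2"])
      (simp_all add: munn_jordan_outer one_11 zero_21 that)
  define k where "k = 1 - pairing P v\<^sub>2 s"
  have "pairing P v\<^sub>1 (s + k *s s\<^sub>2) = 0" "pairing P v\<^sub>2 (s + k *s s\<^sub>2) = 1"
    using assms
    by (simp_all add: pairing.add_right pairing.diff_right pairing.scale_right zero_12 one_22 k_def)
  then have "\<phi> (outer s\<^sub>1 v\<^sub>1) (outer (s + k *s s\<^sub>2) v\<^sub>1)
      = \<phi> (outer (s + k *s s\<^sub>2) v\<^sub>1) (outer s\<^sub>1 v\<^sub>1)"
    by (rule commute)
  moreover have "\<phi> (outer s\<^sub>1 v\<^sub>1) (outer s\<^sub>2 v\<^sub>1) = \<phi> (outer s\<^sub>2 v\<^sub>1) (outer s\<^sub>1 v\<^sub>1)"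
    by (rule commute) (simp_all add: zero_12 one_22)
  ultimately show ?thesis
    by (simp add: outer_add_left outer_scale_left add_left add_right scale_left scale_right)
qed

lemma commute_anchor_right:
  assumes "pairing P v s\<^sub>1 = 0"
  shows "\<phi> (outer s\<^sub>1 v\<^sub>1) (outer s\<^sub>1 v) = \<phi> (outer s\<^sub>1 v) (outer s\<^sub>1 v\<^sub>1)"
proof -
  have commute: "\<phi> (outer s\<^sub>1 v\<^sub>1) (outer s\<^sub>1 \<nu>) = \<phi> (outer s\<^sub>1 \<nu>) (outer s\<^sub>1 v\<^sub>1)"
    if "pairing P \<nu> s\<^sub>1 = 0" "pairing P \<nu> s\<^sub>2 = 1" for \<nu>
    by (rule commute_if_absorbed[where f = "outer s\<^sub>2 \<nu>"])
      (simp_all add: munn_jordan_outer one_11 zero_12 that)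
  define k where "k = 1 - pairing P v s\<^sub>2"
  have "pairing P (v + k *s v\<^sub>2) s\<^sub>1 = 0" "pairing P (v + k *s v\<^sub>2) s\<^sub>2 = 1"
    using assms
    by (simp_all add: pairing.add_left pairing.diff_left pairing.scale_left zero_21 one_22 k_def)
  then have "\<phi> (outer s\<^sub>1 v\<^sub>1) (outer s\<^sub>1 (v + k *s v\<^sub>2))
      = \<phi> (outer s\<^sub>1 (v + k *s v\<^sub>2)) (outer s\<^sub>1 v\<^sub>1)"
    by (rule commute)
  moreover have "\<phi> (outer s\<^sub>1 v\<^sub>1) (outer s\<^sub>1 v\<^sub>2) = \<phi> (outer s\<^sub>1 v\<^sub>2) (outer s\<^sub>1 v\<^sub>1)"
    by (rule commute) (simp_all add: zero_21 one_22)
  ultimately show ?thesis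
    by (simp add: outer_add_right outer_scale_right add_left add_right scale_left scale_right)
qed

lemma commute_anchor: "\<phi> (outer s\<^sub>1 v) (outer s v\<^sub>1) = \<phi> (outer s v\<^sub>1) (outer s\<^sub>1 v)"
proof -
  interpret vec_bilinear "\<lambda>v s. \<phi> (outer s\<^sub>1 v) (outer s v\<^sub>1) - \<phi> (outer s v\<^sub>1) (outer s\<^sub>1 v)"
    by unfold_locales (simp_all add: outer_add_left outer_add_right outer_scale_left
        outer_scale_right add_left add_right scale_left scale_right algebra_simps)
  define a where "a = pairing P v s\<^sub>1"
  define b where "b = pairing P v\<^sub>1 s"
  have x: "pairing P (v - a *s v\<^sub>1) s\<^sub>1 = 0"
    using one_11 by (simp add: pairing.diff_left pairing.scale_left a_def)
  have y: "pairing P v\<^sub>1 (s - b *s s\<^sub>1) = 0"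
    using one_11 by (simp add: pairing.diff_right pairing.scale_right b_def)
  have "\<phi> (outer s\<^sub>1 (v - a *s v\<^sub>1)) (outer (s - b *s s\<^sub>1) v\<^sub>1)
      = \<phi> (outer (s - b *s s\<^sub>1) v\<^sub>1) (outer s\<^sub>1 (v - a *s v\<^sub>1))"
    by (rule commute_if_squares_zero) (simp_all add: munn_jordan_outer x y)
  then show ?thesis
    using split_along[of v s a b v\<^sub>1 s\<^sub>1] commute_anchor_left[OF y] commute_anchor_right[OF x]
    by simp
qed

text \<open>The correction term is forced: at \<open>u = s = s\<^sub>1\<close>, \<open>v = t = v\<^sub>1\<close> the identity
  \<open>outer_eq_tau\<close> demands \<open>\<phi>(s\<^sub>1 v\<^sub>1\<^sup>T, s\<^sub>1 v\<^sub>1\<^sup>T) = 2 \<tau>(s\<^sub>1, v\<^sub>1)\<close>.\<close>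

definition \<tau> :: "'a^'m \<Rightarrow> 'a^'n \<Rightarrow> 'a" where
  "\<tau> u t = \<phi> (outer u v\<^sub>1) (outer s\<^sub>1 t) - \<phi> (outer s\<^sub>1 v\<^sub>1) (outer s\<^sub>1 v\<^sub>1) / 2 * pairing P t u"

lemma vec_bilinear_tau: "vec_bilinear \<tau>"
  by unfold_locales (simp_all add: \<tau>_def outer_add_left outer_add_right outer_scale_left
      outer_scale_right add_left add_right scale_left scale_right pairing.add_left
      pairing.add_right pairing.scale_left pairing.scale_right algebra_simps)

lemma outer_eq_tau:
  "\<phi> (outer u v) (outer s t) = pairing P v s * \<tau> u t + pairing P t u * \<tau> s v"
proof -
  let ?G = "\<lambda>t u. \<phi> (outer u v) (outer s t) - pairing P v s * \<tau> u t - pairing P t u * \<tau> s v"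
  interpret vec_bilinear ?G
    by unfold_locales (simp_all add: \<tau>_def outer_add_left outer_add_right outer_scale_left
        outer_scale_right add_left add_right scale_left scale_right pairing.add_left
        pairing.add_right pairing.scale_left pairing.scale_right algebra_simps)
  have vanish: "?G t' u' = 0" if "pairing P t' u' = 0" for t' u'
    using outer_factor[OF one_11 that, of v s] that by (simp add: \<tau>_def)
  have "?G v\<^sub>1 s\<^sub>1 = 0"
    using commute_anchor[of v s] one_11 two_neq_zero by (simp add: \<tau>_def field_simps)
  then have "?G t u = 0"
    using eq_mult_if_vanishes_with[OF pairing.vec_bilinear_axioms one_11 vanish,
        where v = t and s = u]
    by simp
  then show ?thesis
    by (simp add: algebra_simps)
qed

lemma eq_tensor_lift_munn_jordan: "\<phi> = (\<lambda>x y. tensor_lift \<tau> (munn_jordan P x y))"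
proof -
  interpret tau: vec_bilinear \<tau>
    by (fact vec_bilinear_tau)
  show ?thesis
  proof (rule bilinear_functional_eqI[OF bilinear])
    show "bilinear_functional (\<lambda>x y. tensor_lift \<tau> (munn_jordan P x y))"
      by (intro bilinear_functional_munn_jordan tau.linear_functional_tensor_lift)
  qed (simp add: outer_eq_tau munn_jordan_outer tau.tensor_lift_outer
      linear_functional_add[OF tau.linear_functional_tensor_lift]
      linear_functional_scale[OF tau.linear_functional_tensor_lift])
qed

end

theorem theorem3p5:
  fixes P :: "'a::field^'m::finite^'n::finite"
  assumes "CHAR('a) \<noteq> 2" and "CHAR('a) \<noteq> 3"
    and "2 \<le> CARD('m)" and "2 \<le> CARD('n)"
    and "rank P \<ge> 2"
  shows "munn_zero_jordan_product_determined P TYPE('n \<times> 'm)"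
  unfolding munn_zero_jordan_product_determined_def
proof (intro allI impI)
  fix \<phi> :: "'a^'n^'m \<Rightarrow> 'a^'n^'m \<Rightarrow> 'a"
  assume "bilinear_functional \<phi>" and "\<forall>x y. munn_jordan P x y = 0 \<longrightarrow> \<phi> x y = 0"
  moreover obtain v\<^sub>1 v\<^sub>2 s\<^sub>1 s\<^sub>2 where "pairing P v\<^sub>1 s\<^sub>1 = 1" "pairing P v\<^sub>2 s\<^sub>2 = 1"
    "pairing P v\<^sub>1 s\<^sub>2 = 0" "pairing P v\<^sub>2 s\<^sub>1 = 0"
    using biorthogonal_pairs_exist[OF assms(5)] by blast
  ultimately interpret zero_jordan_functional_biorthogonal P \<phi> v\<^sub>1 v\<^sub>2 s\<^sub>1 s\<^sub>2
    using two_neq_zero_if_CHAR_neq_2[OF assms(1)] by unfold_locales auto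
  show "\<exists>\<tau>. linear_functional \<tau> \<and> (\<forall>x y. \<phi> x y = \<tau> (munn_jordan P x y))"
    using vec_bilinear.linear_functional_tensor_lift[OF vec_bilinear_tau]
      eq_tensor_lift_munn_jordan by metis
qed

end
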